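(* Consider the Joint Randomized Response (JRR) mechanism described in the context, with parameters $0.5<p\le 1$, $q=1-p$ and $1-1/p\le\rho\le 1$, applied to $n$ contributors (with $n$ even) holding binary values $x_1,\dots,x_n\in\{0,1\}$. For $v\in\{0,1\}$ let $n_v$ be the number of contributors with $x_j=v$ and let $I_v$ be the number of reported values $y_j$ equal to $v$. Then the estimator $$\hat n_v=\frac{I_v-nq}{p-q}$$ is an unbiased estimator of $n_v$, i.e. $\mathrm{E}[\hat n_v]=n_v$, for each $v\in\{0,1\}$.
   Context: JRR mechanism: the $n$ contributors are partitioned uniformly at random into $n/2$ disjoint groups of two. In each group $\{u_a,u_b\}$ a pair of indicator variables $(T_a,T_b)\in\{0,1\}^2$ is drawn, independently across groups, with joint distribution $\Pr[T_a=1,T_b=1]=p^2+\rho pq$, $\Pr[T_a=1,T_b=0]=\Pr[T_a=0,T_b=1]=(1-\rho)pq$, $\Pr[T_a=0,T_b=0]=q^2+\rho pq$. Each contributor $u_j$ reports $y_j=x_j$ if $T_j=1$ and $y_j=1-x_j$ if $T_j=0$. *)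

theory Defs
  imports "HOL-Probability.Probability"
begin

definition pair_partitions :: "nat \<Rightarrow> nat set set set" where
  "pair_partitions n = {M. \<Union>M = {..<n} \<and> (\<forall>g\<in>M. card g = 2) \<and>
       (\<forall>g\<in>M. \<forall>h\<in>M. g \<noteq> h \<longrightarrow> g \<inter> h = {})}"

text \<open>Joint distribution of (T_a, T_b) in one group (True = 1, False = 0).\<close>
definition jrr_pair_pmf :: "real \<Rightarrow> real \<Rightarrow> (bool \<times> bool) pmf" where
  "jrr_pair_pmf p \<rho> = embed_pmf (\<lambda>(a, b).
     let q = 1 - p in
     if a \<and> b then p\<^sup>2 + \<rho> * p * q
     else if a \<noteq> b then (1 - \<rho>) * p * q
     else q\<^sup>2 + \<rho> * p * q)"

definition group_of :: "nat set set \<Rightarrow> nat \<Rightarrow> nat set" where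
  "group_of M j = (THE g. g \<in> M \<and> j \<in> g)"

text \<open>Distribution of the indicator vector T: uniform random pairing, then
  independent pair draws per group (first component goes to the smaller member;
  the pair distribution is symmetric, so this choice is immaterial).\<close>
definition jrr_T :: "nat \<Rightarrow> real \<Rightarrow> real \<Rightarrow> (nat \<Rightarrow> bool) pmf" where
  "jrr_T n p \<rho> =
     do { M \<leftarrow> pmf_of_set (pair_partitions n);
          G \<leftarrow> Pi_pmf M (False, False) (\<lambda>_. jrr_pair_pmf p \<rho>);
          return_pmf (\<lambda>j. let g = group_of M j in
                            if j = Min g then fst (G g) else snd (G g)) }"

definition jrr_report :: "(nat \<Rightarrow> nat) \<Rightarrow> (nat \<Rightarrow> bool) \<Rightarrow> nat \<Rightarrow> nat" where
  "jrr_report x T j = (if T j then x j else 1 - x j)"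

end

theory Submission
  imports Defs
begin

text \<open>Whatever the random pairing and whatever the correlation \<rho> inside a group, each single
  indicator T_j is Bernoulli(p): both marginals of the pair distribution are Bernoulli(p).
  By linearity of expectation the number I_v of reports equal to v therefore has mean
  p n_v + q (n - n_v) = (p - q) n_v + n q, which is exactly what the estimator inverts.\<close>

lemma jrr_pair_weights_nonneg:
  fixes p \<rho> :: real
  assumes "1/2 \<le> p" "p \<le> 1" "1 - 1/p \<le> \<rho>" "\<rho> \<le> 1"
  shows "0 \<le> p\<^sup>2 + \<rho> * p * (1 - p)" "0 \<le> (1 - \<rho>) * p * (1 - p)"
    and "0 \<le> (1 - p)\<^sup>2 + \<rho> * p * (1 - p)"
proof -
  have "- (1 - p) \<le> \<rho> * p"
    using assms(1,3) by (simp add: field_simps)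
  then have lower: "- (1 - p)\<^sup>2 \<le> \<rho> * p * (1 - p)"
    using mult_right_mono[of "- (1 - p)" "\<rho> * p" "1 - p"] assms(2)
    by (simp add: power2_eq_square algebra_simps)
  have "(1 - p)\<^sup>2 \<le> p\<^sup>2"
    using assms(1) by (simp add: power2_eq_square algebra_simps)
  with lower show "0 \<le> p\<^sup>2 + \<rho> * p * (1 - p)" "0 \<le> (1 - p)\<^sup>2 + \<rho> * p * (1 - p)"
    by linarith+
  show "0 \<le> (1 - \<rho>) * p * (1 - p)"
    using assms by simp
qed

lemma pmf_jrr_pair_pmf:
  fixes p \<rho> :: real
  assumes "1/2 \<le> p" "p \<le> 1" "1 - 1/p \<le> \<rho>" "\<rho> \<le> 1"
  shows "pmf (jrr_pair_pmf p \<rho>) (True, True) = p\<^sup>2 + \<rho> * p * (1 - p)"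
    and "pmf (jrr_pair_pmf p \<rho>) (True, False) = (1 - \<rho>) * p * (1 - p)"
    and "pmf (jrr_pair_pmf p \<rho>) (False, True) = (1 - \<rho>) * p * (1 - p)"
    and "pmf (jrr_pair_pmf p \<rho>) (False, False) = (1 - p)\<^sup>2 + \<rho> * p * (1 - p)"
proof -
  define f :: "bool \<times> bool \<Rightarrow> real" where "f = (\<lambda>(a, b).
     let q = 1 - p in
     if a \<and> b then p\<^sup>2 + \<rho> * p * q
     else if a \<noteq> b then (1 - \<rho>) * p * q
     else q\<^sup>2 + \<rho> * p * q)"
  have UNIV_pairs:
    "(UNIV :: (bool \<times> bool) set) = {(True, True), (True, False), (False, True), (False, False)}"
    by auto
  have nonneg: "0 \<le> f ab" for ab
    using jrr_pair_weights_nonneg[OF assms] by (cases ab) (auto simp: f_def Let_def)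
  have "(\<integral>\<^sup>+ab. ennreal (f ab) \<partial>count_space UNIV) = ennreal (\<Sum>ab\<in>UNIV. f ab)"
    by (simp add: nn_integral_count_space_finite sum_ennreal nonneg)
  also have "(\<Sum>ab\<in>UNIV. f ab) = 1"
    by (simp add: UNIV_pairs f_def power2_eq_square algebra_simps)
  finally have "pmf (jrr_pair_pmf p \<rho>) ab = f ab" for ab
    unfolding jrr_pair_pmf_def f_def[symmetric] using nonneg by (simp add: pmf_embed_pmf)
  then show "pmf (jrr_pair_pmf p \<rho>) (True, True) = p\<^sup>2 + \<rho> * p * (1 - p)"
    and "pmf (jrr_pair_pmf p \<rho>) (True, False) = (1 - \<rho>) * p * (1 - p)"
    and "pmf (jrr_pair_pmf p \<rho>) (False, True) = (1 - \<rho>) * p * (1 - p)"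
    and "pmf (jrr_pair_pmf p \<rho>) (False, False) = (1 - p)\<^sup>2 + \<rho> * p * (1 - p)"
    by (simp_all add: f_def Let_def)
qed

lemma pmf_map_fst_snd_bool_pair:
  fixes D :: "(bool \<times> bool) pmf"
  shows "pmf (map_pmf fst D) a = pmf D (a, True) + pmf D (a, False)"
    and "pmf (map_pmf snd D) b = pmf D (True, b) + pmf D (False, b)"
proof -
  have "fst -` {a} = {(a, True), (a, False)}" "snd -` {b} = {(True, b), (False, b)}"
    by (auto simp: vimage_def intro: prod_eqI)
  then show "pmf (map_pmf fst D) a = pmf D (a, True) + pmf D (a, False)"
    and "pmf (map_pmf snd D) b = pmf D (True, b) + pmf D (False, b)"
    by (simp_all add: pmf_map measure_measure_pmf_finite)
qed

lemma jrr_pair_pmf_marginals: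
  fixes p \<rho> :: real
  assumes "1/2 \<le> p" "p \<le> 1" "1 - 1/p \<le> \<rho>" "\<rho> \<le> 1"
  shows "map_pmf fst (jrr_pair_pmf p \<rho>) = bernoulli_pmf p"
    and "map_pmf snd (jrr_pair_pmf p \<rho>) = bernoulli_pmf p"
proof -
  have sums: "p\<^sup>2 + \<rho> * p * (1 - p) + (1 - \<rho>) * p * (1 - p) = p"
    "(1 - \<rho>) * p * (1 - p) + ((1 - p)\<^sup>2 + \<rho> * p * (1 - p)) = 1 - p"
    by (simp_all add: power2_eq_square algebra_simps)
  have p_nonneg: "0 \<le> p" using assms(1) by simp
  note simps = pmf_map_fst_snd_bool_pair pmf_jrr_pair_pmf[OF assms] sums p_nonneg assms(2)
  show "map_pmf fst (jrr_pair_pmf p \<rho>) = bernoulli_pmf p"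
  proof (rule pmf_eqI)
    fix a show "pmf (map_pmf fst (jrr_pair_pmf p \<rho>)) a = pmf (bernoulli_pmf p) a"
      by (cases a) (simp_all add: simps)
  qed
  show "map_pmf snd (jrr_pair_pmf p \<rho>) = bernoulli_pmf p"
  proof (rule pmf_eqI)
    fix b show "pmf (map_pmf snd (jrr_pair_pmf p \<rho>)) b = pmf (bernoulli_pmf p) b"
      by (cases b) (simp_all add: simps)
  qed
qed

lemma finite_pair_partitions: "finite (pair_partitions n)"
  by (rule finite_subset[of _ "Pow (Pow {..<n})"]) (auto simp: pair_partitions_def)

lemma finite_pair_partition: "M \<in> pair_partitions n \<Longrightarrow> finite M"
  by (rule finite_subset[of _ "Pow {..<n}"]) (auto simp: pair_partitions_def)

lemma pair_partitions_nonempty: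
  assumes "even n"
  shows "pair_partitions n \<noteq> {}"
proof -
  obtain k where k: "n = 2 * k" using assms by (elim evenE)
  define M where "M = (\<lambda>i. {2 * i, 2 * i + 1}) ` {..<k}"
  have "{..<n} \<subseteq> \<Union>M"
  proof
    fix j assume "j \<in> {..<n}"
    then have "j div 2 < k" using k by simp
    moreover have "j = 2 * (j div 2) \<or> j = 2 * (j div 2) + 1" by presburger
    ultimately show "j \<in> \<Union>M" unfolding M_def by blast
  qed
  moreover have "\<Union>M \<subseteq> {..<n}" unfolding M_def k by auto
  moreover have "\<forall>g\<in>M. \<forall>h\<in>M. g \<noteq> h \<longrightarrow> g \<inter> h = {}"
    unfolding M_def by auto presburger+
  moreover have "\<forall>g\<in>M. card g = 2" unfolding M_def by auto
  ultimately have "M \<in> pair_partitions n"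
    unfolding pair_partitions_def by blast
  then show ?thesis by blast
qed

lemma group_of_pair_partition:
  assumes "M \<in> pair_partitions n" "j < n"
  shows "group_of M j \<in> M" and "j \<in> group_of M j"
proof -
  have union: "\<Union>M = {..<n}" and disjoint: "\<forall>g\<in>M. \<forall>h\<in>M. g \<noteq> h \<longrightarrow> g \<inter> h = {}"
    using assms(1) unfolding pair_partitions_def by simp_all
  obtain g where g: "g \<in> M" "j \<in> g" using union assms(2) by blast
  have "group_of M j = g"
    unfolding group_of_def
  proof (rule the_equality)
    fix h assume "h \<in> M \<and> j \<in> h"
    with g disjoint show "h = g" by blast
  qed (use g in blast)
  with g show "group_of M j \<in> M" "j \<in> group_of M j" by simp_all
qed

lemma jrr_T_marginal:
  fixes p \<rho> :: real
  assumes "even n" "1/2 \<le> p" "p \<le> 1" "1 - 1/p \<le> \<rho>" "\<rho> \<le> 1" "j < n"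
  shows "map_pmf (\<lambda>T. T j) (jrr_T n p \<rho>) = bernoulli_pmf p"
proof -
  define own_entry :: "nat set set \<Rightarrow> bool \<times> bool \<Rightarrow> bool" where
    "own_entry = (\<lambda>M. if j = Min (group_of M j) then fst else snd)"
  have "map_pmf (\<lambda>T. T j) (jrr_T n p \<rho>) = pmf_of_set (pair_partitions n) \<bind>
      (\<lambda>M. map_pmf (\<lambda>G. own_entry M (G (group_of M j)))
        (Pi_pmf M (False, False) (\<lambda>_. jrr_pair_pmf p \<rho>)))"
    unfolding jrr_T_def own_entry_def map_pmf_def
    by (simp add: bind_assoc_pmf bind_return_pmf Let_def if_distribR)
  also have "\<dots> = pmf_of_set (pair_partitions n) \<bind> (\<lambda>M. bernoulli_pmf p)"
  proof (rule bind_pmf_cong[OF refl])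
    fix M assume "M \<in> set_pmf (pmf_of_set (pair_partitions n))"
    then have M: "M \<in> pair_partitions n"
      using finite_pair_partitions pair_partitions_nonempty[OF assms(1)] by simp
    then have "map_pmf (\<lambda>G. G (group_of M j)) (Pi_pmf M (False, False) (\<lambda>_. jrr_pair_pmf p \<rho>))
        = jrr_pair_pmf p \<rho>"
      by (simp add: Pi_pmf_component[OF finite_pair_partition[OF M]]
          group_of_pair_partition(1)[OF M assms(6)])
    then have "map_pmf (\<lambda>G. own_entry M (G (group_of M j)))
        (Pi_pmf M (False, False) (\<lambda>_. jrr_pair_pmf p \<rho>))
        = map_pmf (own_entry M) (jrr_pair_pmf p \<rho>)"
      by (metis map_pmf_comp)
    also have "\<dots> = bernoulli_pmf p"
      using jrr_pair_pmf_marginals[OF assms(2-5)]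
      by (cases "j = Min (group_of M j)") (simp_all add: own_entry_def)
    finally show "map_pmf (\<lambda>G. own_entry M (G (group_of M j)))
        (Pi_pmf M (False, False) (\<lambda>_. jrr_pair_pmf p \<rho>)) = bernoulli_pmf p" .
  qed
  also have "\<dots> = bernoulli_pmf p" by simp
  finally show ?thesis .
qed

lemma expectation_card_bernoulli_marginals:
  fixes D :: "('i \<Rightarrow> bool) pmf" and P :: "'i \<Rightarrow> bool \<Rightarrow> bool" and p :: real
  assumes "finite A" "0 \<le> p" "p \<le> 1"
    and "\<And>j. j \<in> A \<Longrightarrow> map_pmf (\<lambda>T. T j) D = bernoulli_pmf p"
  shows "measure_pmf.expectation D (\<lambda>T. real (card {j \<in> A. P j (T j)}))
      = p * card {j \<in> A. P j True} + (1 - p) * card {j \<in> A. P j False}"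
proof -
  have card_as_sum: "real (card {j \<in> A. P j (b j)}) = (\<Sum>j\<in>A. of_bool (P j (b j)))" for b
    using assms(1) by (simp add: Collect_conj_eq Int_commute)
  have integrable: "integrable D (\<lambda>T. of_bool (P j (T j)) :: real)" for j
    by (rule measure_pmf.integrable_const_bound[where B=1]) auto
  have marginal: "measure_pmf.expectation D (\<lambda>T. of_bool (P j (T j)) :: real)
      = p * of_bool (P j True) + (1 - p) * of_bool (P j False)" if "j \<in> A" for j
  proof -
    have "measure_pmf.expectation D (\<lambda>T. of_bool (P j (T j)) :: real)
        = measure_pmf.expectation (map_pmf (\<lambda>T. T j) D) (\<lambda>b. of_bool (P j b))"
      by simp
    then show ?thesis
      using assms(2-4) that by (simp add: mult.commute)
  qed
  have "measure_pmf.expectation D (\<lambda>T. real (card {j \<in> A. P j (T j)}))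
      = (\<Sum>j\<in>A. measure_pmf.expectation D (\<lambda>T. of_bool (P j (T j)) :: real))"
    by (simp add: card_as_sum integrable)
  also have "\<dots> = (\<Sum>j\<in>A. p * of_bool (P j True) + (1 - p) * of_bool (P j False))"
    by (rule sum.cong) (simp_all add: marginal)
  also have "\<dots> = p * card {j \<in> A. P j True} + (1 - p) * card {j \<in> A. P j False}"
    by (simp add: sum.distrib flip: sum_distrib_left card_as_sum[of "\<lambda>_. True"]
        card_as_sum[of "\<lambda>_. False"])
  finally show ?thesis .
qed

theorem theorem1:
  fixes n :: nat and p q \<rho> :: real and x :: "nat \<Rightarrow> nat" and v :: nat
  assumes "even n"
    and "1/2 < p" and "p \<le> 1" and "q = 1 - p"
    and "1 - 1/p \<le> \<rho>" and "\<rho> \<le> 1"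
    and "\<forall>j<n. x j \<in> {0, 1}"
    and "v \<in> {0, 1}"
  shows "measure_pmf.expectation (jrr_T n p \<rho>)
           (\<lambda>T. (real (card {j \<in> {..<n}. jrr_report x T j = v}) - real n * q) / (p - q))
         = real (card {j \<in> {..<n}. x j = v})"
proof -
  define n\<^sub>v where "n\<^sub>v = card {j \<in> {..<n}. x j = v}"
  define I\<^sub>v where "I\<^sub>v = (\<lambda>T. real (card {j \<in> {..<n}. jrr_report x T j = v}))"
  have subset: "{j \<in> {..<n}. x j = v} \<subseteq> {..<n}" by auto
  have "{j \<in> {..<n}. 1 - x j = v} = {..<n} - {j \<in> {..<n}. x j = v}"
    using assms(7,8) by auto
  then have flipped: "real (card {j \<in> {..<n}. 1 - x j = v}) = real n - real n\<^sub>v"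
    using card_Diff_subset[OF finite_subset[OF subset] subset] card_mono[OF _ subset]
    unfolding n\<^sub>v_def by (simp add: of_nat_diff)
  have mean: "measure_pmf.expectation (jrr_T n p \<rho>) I\<^sub>v = p * n\<^sub>v + q * (real n - real n\<^sub>v)"
    unfolding I\<^sub>v_def jrr_report_def
    using expectation_card_bernoulli_marginals[of "{..<n}" p "jrr_T n p \<rho>"
        "\<lambda>j b. (if b then x j else 1 - x j) = v"]
      jrr_T_marginal[OF assms(1) _ assms(3,5,6)] flipped assms(2-4)
    by (simp add: n\<^sub>v_def)
  have "card {j \<in> {..<n}. jrr_report x T j = v} \<le> n" for T
    using card_mono[of "{..<n}" "{j \<in> {..<n}. jrr_report x T j = v}"] by auto
  then have "integrable (jrr_T n p \<rho>) I\<^sub>v"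
    unfolding I\<^sub>v_def by (intro measure_pmf.integrable_const_bound[where B = n]) simp_all
  moreover have "p - q \<noteq> 0" using assms(2,4) by simp
  ultimately show ?thesis
    using mean unfolding I\<^sub>v_def n\<^sub>v_def by (simp add: field_simps)
qed

end
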